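(* Let $\mathbb{F}_2$ be the field with two elements and consider the $20{,}160$ matrices $M \in \mathbb{F}_2^{4\times 4}$ with $\mathrm{rank}_{\mathbb{F}_2}(M) = 4$. Among these, exactly $14{,}856$ are $(2,2)$-Hadamard expressible over $\mathbb{F}_2$, and exactly $5{,}304$ are not $(2,2)$-Hadamard expressible over $\mathbb{F}_2$.
   Context: The Hadamard product of two $m\times n$ matrices $A=(a_{ij})$ and $B=(b_{ij})$ is the $m\times n$ matrix $A\circ B=(a_{ij}b_{ij})$. A matrix $M \in \mathbb{F}_2^{4\times 4}$ is called $(2,2)$-Hadamard expressible over $\mathbb{F}_2$ if there exist $A, B \in \mathbb{F}_2^{4\times 4}$ with $\mathrm{rank}_{\mathbb{F}_2}(A) \le 2$ and $\mathrm{rank}_{\mathbb{F}_2}(B) \le 2$ such that $M = A \circ B$ (entrywise product in $\mathbb{F}_2$, i.e. bitwise AND). *)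

theory Defs
  imports "HOL-Analysis.Analysis" "HOL-Library.Z2"
begin

definition hadamard_prod :: "'a::times^'n^'m \<Rightarrow> 'a^'n^'m \<Rightarrow> 'a^'n^'m" where
  "hadamard_prod A B = (\<chi> i j. A $ i $ j * B $ i $ j)"

definition hadamard_22_expressible :: "bit^4^4 \<Rightarrow> bool" where
  "hadamard_22_expressible M \<longleftrightarrow>
     (\<exists>A B :: bit^4^4. rank A \<le> 2 \<and> rank B \<le> 2 \<and> M = hadamard_prod A B)"

end

theory Submission
  imports Defs
begin

text \<open>
  Over \<open>\<bbbF>\<^sub>2\<close> a matrix of rank at most 2 has all its rows in a span \<open>{0, x, y, x + y}\<close>, so \<open>M\<close> is
  (2,2)-Hadamard expressible iff its rows lie in a product set \<open>{a * b | a \<in> U, b \<in> W}\<close> of two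
  such spans. A matrix of rank 4 has four distinct, linearly independent rows, and both properties
  depend only on the set of rows, which is shared by exactly \<open>4! = 24\<close> matrices. It remains to
  count 4-subsets of \<open>\<bbbF>\<^sub>2\<^sup>4\<close>: 840 of them are bases and 619 of these lie in a product
  set, and \<open>24 * 840 = 20160\<close>, \<open>24 * 619 = 14856\<close>. Both counts are obtained by evaluation. Every
  product set of two planes lies in one of 80 maximal ones, which are tabulated together with a
  pair of planes generating each; the covering and the generation are themselves checked by
  evaluation.
\<close>

lemma rows_eq_range: "rows A = range (vec_nth A)"
  by (auto simp: rows_def row_def vec_lambda_eta)

lemma subset_pair_if_card_le_2:
  assumes "finite B" "card B \<le> 2"
  obtains x y where "B \<subseteq> {x, y}"
proof -
  consider "card B = 0" | "card B = 1" | "card B = 2"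
    using assms(2) by linarith
  then show thesis
  proof cases
    case 1
    then show thesis
      using assms(1) that by simp
  next
    case 2
    then obtain x where "B = {x}"
      by (rule card_1_singletonE)
    then show thesis
      using that by blast
  next
    case 3
    then show thesis
      using that by (auto simp: card_2_iff)
  qed
qed

lemma rank_le_2_iff:
  fixes A :: "'a::field^'n^'m"
  shows "rank A \<le> 2 \<longleftrightarrow> (\<exists>x y. range (vec_nth A) \<subseteq> vec.span {x, y})"
proof
  assume "rank A \<le> 2"
  obtain B where B: "B \<subseteq> rows A" "rows A \<subseteq> vec.span B" "card B = vec.dim (rows A)"
    by (meson vec.basis_exists)
  have "finite B"
    using B(1) by (rule finite_subset) (simp add: rows_eq_range)
  moreover have "card B \<le> 2"
    using B(3) \<open>rank A \<le> 2\<close> by (simp add: row_rank_def_gen)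
  ultimately obtain x y where "B \<subseteq> {x, y}"
    by (rule subset_pair_if_card_le_2)
  with B(2) have "rows A \<subseteq> vec.span {x, y}"
    using vec.span_mono by blast
  then show "\<exists>x y. range (vec_nth A) \<subseteq> vec.span {x, y}"
    by (auto simp: rows_eq_range)
next
  assume "\<exists>x y. range (vec_nth A) \<subseteq> vec.span {x, y}"
  then obtain x y where "rows A \<subseteq> vec.span {x, y}"
    by (auto simp: rows_eq_range)
  then have "vec.dim (rows A) \<le> card {x, y}"
    by (rule vec.dim_le_card) simp
  also have "\<dots> \<le> 2"
    by (simp add: card_insert_le_m1)
  finally show "rank A \<le> 2"
    by (simp add: row_rank_def_gen)
qed

lemma rank_eq_nrows_iff:
  fixes M :: "'a::field^'n^'m"
  shows "rank M = CARD('m) \<longleftrightarrow>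
    card (range (vec_nth M)) = CARD('m) \<and> vec.independent (range (vec_nth M))"
proof -
  have fin: "finite (range (vec_nth M))"
    by simp
  have "card (range (vec_nth M)) \<le> CARD('m)"
    by (rule card_image_le) simp
  moreover have "vec.dim (range (vec_nth M)) \<le> card (range (vec_nth M))"
    by (rule vec.dim_le_card) (auto intro: vec.span_base)
  ultimately have "rank M = CARD('m) \<longleftrightarrow>
      card (range (vec_nth M)) = CARD('m) \<and> vec.dim (range (vec_nth M)) = card (range (vec_nth M))"
    by (auto simp: row_rank_def_gen rows_eq_range)
  also have "\<dots> \<longleftrightarrow> card (range (vec_nth M)) = CARD('m) \<and> vec.independent (range (vec_nth M))"
    using vec.dim_eq_card_independent vec.card_eq_dim[OF order_refl _ fin]
      vec.span_superset[of "range (vec_nth M)"]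
    by auto
  finally show ?thesis .
qed

section \<open>Hadamard expressibility over \<open>\<bbbF>\<^sub>2\<close>\<close>

lemma bit_vec_add_self: "(x::bit^'n) + x = 0"
  by (simp add: vec_eq_iff)

lemma bit_vec_diff_eq_add: "(x::bit^'n) - y = x + y"
  by (simp add: vec_eq_iff)

lemma span_insert_bit:
  fixes a :: "bit^'n"
  shows "vec.span (insert a S) = vec.span S \<union> (+) a ` vec.span S"
proof (rule set_eqI)
  fix x :: "bit^'n"
  have ex_bit: "(\<exists>k::bit. P k) \<longleftrightarrow> P 0 \<or> P 1" for P
    by (metis bit_not_one_iff)
  have "x \<in> vec.span (insert a S) \<longleftrightarrow> x \<in> vec.span S \<or> a + x \<in> vec.span S"
    by (simp add: vec.span_breakdown_eq ex_bit bit_vec_diff_eq_add add.commute)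
  moreover have "x \<in> (+) a ` vec.span S \<longleftrightarrow> a + x \<in> vec.span S"
    by (auto simp: image_iff add.assoc[symmetric] bit_vec_add_self intro: bexI[of _ "a + x"])
  ultimately show "x \<in> vec.span (insert a S) \<longleftrightarrow> x \<in> vec.span S \<union> (+) a ` vec.span S"
    by blast
qed

definition hadamard_products :: "('a::times^'n) set \<Rightarrow> ('a^'n) set \<Rightarrow> ('a^'n) set" where
  "hadamard_products U W = {a * b | a b. a \<in> U \<and> b \<in> W}"

definition hadamard_22_rows :: "('a::field^'n) set \<Rightarrow> bool" where
  "hadamard_22_rows S \<longleftrightarrow> (\<exists>x y x' y'. S \<subseteq> hadamard_products (vec.span {x, y}) (vec.span {x', y'}))"

lemma hadamard_22_expressible_iff: "hadamard_22_expressible M \<longleftrightarrow> hadamard_22_rows (range (vec_nth M))"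
  unfolding hadamard_22_rows_def
proof
  assume "hadamard_22_expressible M"
  then obtain A B :: "bit^4^4" where "rank A \<le> 2" "rank B \<le> 2" and M: "M = hadamard_prod A B"
    unfolding hadamard_22_expressible_def by blast
  then obtain x y x' y' where "range (vec_nth A) \<subseteq> vec.span {x, y}" "range (vec_nth B) \<subseteq> vec.span {x', y'}"
    unfolding rank_le_2_iff by blast
  moreover have "M $ i = A $ i * B $ i" for i
    by (simp add: M hadamard_prod_def times_vec_def)
  ultimately have "range (vec_nth M) \<subseteq> hadamard_products (vec.span {x, y}) (vec.span {x', y'})"
    unfolding hadamard_products_def by blast
  then show "\<exists>x y x' y'. range (vec_nth M) \<subseteq> hadamard_products (vec.span {x, y}) (vec.span {x', y'})"
    by blast
next
  assume "\<exists>x y x' y'. range (vec_nth M) \<subseteq> hadamard_products (vec.span {x, y}) (vec.span {x', y'})"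
  then obtain x y x' y' where "range (vec_nth M) \<subseteq> hadamard_products (vec.span {x, y}) (vec.span {x', y'})"
    by blast
  then have "M $ i \<in> hadamard_products (vec.span {x, y}) (vec.span {x', y'})" for i
    by blast
  then have "\<exists>a b. M $ i = a * b \<and> a \<in> vec.span {x, y} \<and> b \<in> vec.span {x', y'}" for i
    unfolding hadamard_products_def by blast
  then obtain a b where ab: "\<And>i. M $ i = a i * b i" "\<And>i. a i \<in> vec.span {x, y}" "\<And>i. b i \<in> vec.span {x', y'}"
    by metis
  have "rank (\<chi> i. a i) \<le> 2" "rank (\<chi> i. b i) \<le> 2"
    unfolding rank_le_2_iff using ab(2,3) by auto
  moreover have "M = hadamard_prod (\<chi> i. a i) (\<chi> i. b i)"
    by (simp add: vec_eq_iff hadamard_prod_def times_vec_def ab(1))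
  ultimately show "hadamard_22_expressible M"
    unfolding hadamard_22_expressible_def by blast
qed

lemma card_vec_with_range:
  fixes S :: "'a set"
  assumes card_S: "card S = CARD('n::finite)"
  shows "card {M :: 'a^'n. range (vec_nth M) = S} = fact CARD('n)"
proof -
  have "finite S"
    using card_S by (metis card.infinite zero_less_card_finite not_less_zero)
  then obtain g :: "'n \<Rightarrow> 'a" where g: "bij_betw g UNIV S"
    using finite_same_card_bij[of "UNIV :: 'n set" S] card_S by auto
  have "{M :: 'a^'n. range (vec_nth M) = S} = (\<lambda>p. vec_lambda (g \<circ> p)) ` {p. p permutes UNIV}"
  proof (intro set_eqI iffI)
    fix M :: "'a^'n"
    assume "M \<in> {M. range (vec_nth M) = S}"
    then have range_M: "range (vec_nth M) = S"
      by simp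
    define p where "p = inv_into UNIV g \<circ> vec_nth M"
    have "g \<circ> p = vec_nth M"
      using range_M g by (auto simp: p_def fun_eq_iff bij_betw_def f_inv_into_f)
    moreover have "inj (vec_nth M)"
      using range_M card_S by (simp add: inj_on_iff_eq_card)
    ultimately have "inj p"
      by (metis inj_on_imageI2)
    then have "p permutes UNIV"
      using finite_UNIV_inj_surj[of p] by (auto intro: bij_imp_permutes simp: bij_def)
    then show "M \<in> (\<lambda>p. vec_lambda (g \<circ> p)) ` {p. p permutes UNIV}"
      using \<open>g \<circ> p = vec_nth M\<close> by (metis (mono_tags) image_eqI mem_Collect_eq vec_nth_inverse)
  next
    fix M :: "'a^'n"
    assume "M \<in> (\<lambda>p. vec_lambda (g \<circ> p)) ` {p. p permutes UNIV}"
    then obtain p where p: "p permutes UNIV" "M = vec_lambda (g \<circ> p)"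
      by blast
    then have "range (vec_nth M) = g ` range p"
      by (simp add: image_comp)
    also have "\<dots> = S"
      using p(1) g by (simp add: permutes_image bij_betw_def)
    finally show "M \<in> {M. range (vec_nth M) = S}"
      by simp
  qed
  moreover have "inj_on (\<lambda>p. vec_lambda (g \<circ> p)) {p. p permutes UNIV}"
    using g by (auto intro!: inj_onI simp: vec_lambda_inject fun_eq_iff bij_betw_def inj_eq)
  ultimately show ?thesis
    by (simp add: card_image card_permutations)
qed

lemma card_vec_with_range_in:
  assumes "finite F" and card_F: "\<And>S. S \<in> F \<Longrightarrow> card S = CARD('n::finite)"
  shows "card {M :: 'a^'n. range (vec_nth M) \<in> F} = fact CARD('n) * card F"
proof -
  have "{M :: 'a^'n. range (vec_nth M) \<in> F} = (\<Union>S\<in>F. {M. range (vec_nth M) = S})"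
    by auto
  moreover have "finite {M :: 'a^'n. range (vec_nth M) = S}" if "S \<in> F" for S
    using card_vec_with_range[OF card_F[OF that]] by (metis card.infinite fact_nonzero)
  moreover have "{M :: 'a^'n. range (vec_nth M) = S} \<inter> {M. range (vec_nth M) = S'} = {}" if "S \<noteq> S'" for S S'
    using that by auto
  ultimately have "card {M :: 'a^'n. range (vec_nth M) \<in> F} = (\<Sum>S\<in>F. card {M :: 'a^'n. range (vec_nth M) = S})"
    using \<open>finite F\<close> by (simp add: card_UN_disjoint)
  also have "\<dots> = (\<Sum>S\<in>F. fact CARD('n))"
    using card_F card_vec_with_range by (intro sum.cong) auto
  finally show ?thesis
    by simp
qed

lemma card_Collect_image_bij:
  assumes "bij f"
  shows "card {S. P S} = card {T. P (f ` T)}"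
proof -
  have "S = f ` (f -` S)" for S
    using assms by (simp add: bij_is_surj surj_image_vimage_eq)
  then have "{S. P S} = (`) f ` {T. P (f ` T)}"
    by (auto intro: image_eqI[of _ _ "f -` _"])
  moreover have "inj_on ((`) f) {T. P (f ` T)}"
    using assms by (auto intro: inj_onI simp: bij_def inj_image_eq_iff)
  ultimately show ?thesis
    by (simp add: card_image)
qed

lemma card_4_subsets_eq_card_sorted:
  fixes P :: "'a::{linorder,finite} set \<Rightarrow> bool"
  shows "card {T. card T = 4 \<and> P T} = card {(a, b, c, d). a < b \<and> b < c \<and> c < d \<and> P {a, b, c, d}}"
proof -
  let ?Q = "{(a, b, c, d). a < b \<and> b < c \<and> c < d \<and> P {a, b, c, d}}"
  have card: "card {a, b, c, d} = 4" if "a < b" "b < c" "c < d" for a b c d :: 'a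
    using that by (auto simp: card_insert_if)
  have sorted: "sorted_list_of_set {a, b, c, d} = [a, b, c, d]" if "a < b" "b < c" "c < d" for a b c d :: 'a
    using that card by (intro sorted_list_of_set_unique[THEN iffD1]) auto
  have inj: "inj_on (\<lambda>(a, b, c, d). {a, b, c, d}) ?Q"
  proof (rule inj_onI, clarsimp)
    fix a b c d a' b' c' d' :: 'a
    assume "a < b" "b < c" "c < d" "a' < b'" "b' < c'" "c' < d'" "{a, b, c, d} = {a', b', c', d'}"
    then have "[a, b, c, d] = [a', b', c', d']"
      using sorted by metis
    then show "a = a' \<and> b = b' \<and> c = c' \<and> d = d'"
      by simp
  qed
  have image: "(\<lambda>(a, b, c, d). {a, b, c, d}) ` ?Q = {T. card T = 4 \<and> P T}"
  proof (intro set_eqI iffI)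
    fix T
    assume "T \<in> (\<lambda>(a, b, c, d). {a, b, c, d}) ` ?Q"
    then show "T \<in> {T. card T = 4 \<and> P T}"
      using card by auto
  next
    fix T :: "'a set"
    assume "T \<in> {T. card T = 4 \<and> P T}"
    then have T: "card T = 4" "P T"
      by auto
    define L where "L = sorted_list_of_set T"
    have "length L = 4"
      using T(1) by (simp add: L_def)
    then obtain a b c d where L: "L = [a, b, c, d]"
      by (auto simp: numeral_eq_Suc length_Suc_conv)
    then have "sorted_wrt (<) [a, b, c, d]" "set [a, b, c, d] = T"
      unfolding L_def by (metis strict_sorted_list_of_set, metis finite set_sorted_list_of_set)
    then show "T \<in> (\<lambda>(a, b, c, d). {a, b, c, d}) ` ?Q"
      using T(2) by (auto intro!: image_eqI[of _ _ "(a, b, c, d)"])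
  qed
  show ?thesis
    using card_image[OF inj] by (simp only: image)
qed

lemma card_sorted_quadruples:
  fixes xs :: "'a::linorder list"
  assumes "sorted_wrt (<) xs" "set xs = UNIV"
  shows "card {(a, b, c, d). a < b \<and> b < c \<and> c < d \<and> Q a b c d} =
    (\<Sum>a\<leftarrow>xs. \<Sum>b\<leftarrow>filter ((<) a) xs. \<Sum>c\<leftarrow>filter ((<) b) xs.
      length (filter (Q a b c) (filter ((<) c) xs)))"
proof -
  have "distinct xs"
    using assms(1) by (simp add: strict_sorted_iff)
  then have "(\<Sum>a\<leftarrow>xs. \<Sum>b\<leftarrow>filter ((<) a) xs. \<Sum>c\<leftarrow>filter ((<) b) xs.
      length (filter (Q a b c) (filter ((<) c) xs))) =
    (\<Sum>a\<in>set xs. \<Sum>b\<in>{b \<in> set xs. a < b}. \<Sum>c\<in>{c \<in> set xs. b < c}.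
      card {d \<in> set xs. c < d \<and> Q a b c d})"
    by (simp add: sum_list_distinct_conv_sum_set distinct_length_filter Int_def conj_commute)
  also have "\<dots> = card (SIGMA a:set xs. SIGMA b:{b \<in> set xs. a < b}. SIGMA c:{c \<in> set xs. b < c}.
      {d \<in> set xs. c < d \<and> Q a b c d})"
    by (simp add: card_SigmaI finite_SigmaI)
  also have "(SIGMA a:set xs. SIGMA b:{b \<in> set xs. a < b}. SIGMA c:{c \<in> set xs. b < c}.
      {d \<in> set xs. c < d \<and> Q a b c d}) = {(a, b, c, d). a < b \<and> b < c \<and> c < d \<and> Q a b c d}"
    using assms(2) by auto
  finally show ?thesis ..
qed

lemma filter_greater_eq_tl_dropWhile:
  fixes xs :: "'a::linorder list"
  assumes "sorted_wrt (<) xs" "a \<in> set xs"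
  shows "filter ((<) a) xs = tl (dropWhile (\<lambda>b. b \<noteq> a) xs)"
  using assms
proof (induction xs)
  case (Cons x xs)
  show ?case
  proof (cases "x = a")
    case True
    then show ?thesis
      using Cons.prems(1) by (simp add: filter_id_conv)
  next
    case False
    then have "x < a"
      using Cons.prems by auto
    then show ?thesis
      using False Cons by auto
  qed
qed simp

section \<open>Nibbles as a model of \<open>\<bbbF>\<^sub>2\<^sup>4\<close>\<close>

text \<open>
  The vector of binary digits of \<open>k < 16\<close> is represented by the constructor \<open>Nk\<close>: coordinate
  \<open>i\<close> of \<open>nibble_vec (Nk)\<close> is the digit of \<open>k\<close> at position \<open>Rep_bit0 i \<in> {0..3}\<close>. Sum and
  Hadamard product are tabulated, and checked against \<open>xor\<close> and \<open>and\<close> on \<open>nat\<close>, so that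
  the computations below proceed by case distinction only.
\<close>

datatype nibble = N0 | N1 | N2 | N3 | N4 | N5 | N6 | N7 | N8 | N9 | N10 | N11 | N12 | N13 | N14 | N15

primrec nibble_xor :: "nibble \<Rightarrow> nibble \<Rightarrow> nibble" where
  "nibble_xor N0 b = case_nibble N0 N1 N2 N3 N4 N5 N6 N7 N8 N9 N10 N11 N12 N13 N14 N15 b"
| "nibble_xor N1 b = case_nibble N1 N0 N3 N2 N5 N4 N7 N6 N9 N8 N11 N10 N13 N12 N15 N14 b"
| "nibble_xor N2 b = case_nibble N2 N3 N0 N1 N6 N7 N4 N5 N10 N11 N8 N9 N14 N15 N12 N13 b"
| "nibble_xor N3 b = case_nibble N3 N2 N1 N0 N7 N6 N5 N4 N11 N10 N9 N8 N15 N14 N13 N12 b"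
| "nibble_xor N4 b = case_nibble N4 N5 N6 N7 N0 N1 N2 N3 N12 N13 N14 N15 N8 N9 N10 N11 b"
| "nibble_xor N5 b = case_nibble N5 N4 N7 N6 N1 N0 N3 N2 N13 N12 N15 N14 N9 N8 N11 N10 b"
| "nibble_xor N6 b = case_nibble N6 N7 N4 N5 N2 N3 N0 N1 N14 N15 N12 N13 N10 N11 N8 N9 b"
| "nibble_xor N7 b = case_nibble N7 N6 N5 N4 N3 N2 N1 N0 N15 N14 N13 N12 N11 N10 N9 N8 b"
| "nibble_xor N8 b = case_nibble N8 N9 N10 N11 N12 N13 N14 N15 N0 N1 N2 N3 N4 N5 N6 N7 b"
| "nibble_xor N9 b = case_nibble N9 N8 N11 N10 N13 N12 N15 N14 N1 N0 N3 N2 N5 N4 N7 N6 b"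
| "nibble_xor N10 b = case_nibble N10 N11 N8 N9 N14 N15 N12 N13 N2 N3 N0 N1 N6 N7 N4 N5 b"
| "nibble_xor N11 b = case_nibble N11 N10 N9 N8 N15 N14 N13 N12 N3 N2 N1 N0 N7 N6 N5 N4 b"
| "nibble_xor N12 b = case_nibble N12 N13 N14 N15 N8 N9 N10 N11 N4 N5 N6 N7 N0 N1 N2 N3 b"
| "nibble_xor N13 b = case_nibble N13 N12 N15 N14 N9 N8 N11 N10 N5 N4 N7 N6 N1 N0 N3 N2 b"
| "nibble_xor N14 b = case_nibble N14 N15 N12 N13 N10 N11 N8 N9 N6 N7 N4 N5 N2 N3 N0 N1 b"
| "nibble_xor N15 b = case_nibble N15 N14 N13 N12 N11 N10 N9 N8 N7 N6 N5 N4 N3 N2 N1 N0 b"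

primrec nibble_and :: "nibble \<Rightarrow> nibble \<Rightarrow> nibble" where
  "nibble_and N0 b = case_nibble N0 N0 N0 N0 N0 N0 N0 N0 N0 N0 N0 N0 N0 N0 N0 N0 b"
| "nibble_and N1 b = case_nibble N0 N1 N0 N1 N0 N1 N0 N1 N0 N1 N0 N1 N0 N1 N0 N1 b"
| "nibble_and N2 b = case_nibble N0 N0 N2 N2 N0 N0 N2 N2 N0 N0 N2 N2 N0 N0 N2 N2 b"
| "nibble_and N3 b = case_nibble N0 N1 N2 N3 N0 N1 N2 N3 N0 N1 N2 N3 N0 N1 N2 N3 b"
| "nibble_and N4 b = case_nibble N0 N0 N0 N0 N4 N4 N4 N4 N0 N0 N0 N0 N4 N4 N4 N4 b"
| "nibble_and N5 b = case_nibble N0 N1 N0 N1 N4 N5 N4 N5 N0 N1 N0 N1 N4 N5 N4 N5 b"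
| "nibble_and N6 b = case_nibble N0 N0 N2 N2 N4 N4 N6 N6 N0 N0 N2 N2 N4 N4 N6 N6 b"
| "nibble_and N7 b = case_nibble N0 N1 N2 N3 N4 N5 N6 N7 N0 N1 N2 N3 N4 N5 N6 N7 b"
| "nibble_and N8 b = case_nibble N0 N0 N0 N0 N0 N0 N0 N0 N8 N8 N8 N8 N8 N8 N8 N8 b"
| "nibble_and N9 b = case_nibble N0 N1 N0 N1 N0 N1 N0 N1 N8 N9 N8 N9 N8 N9 N8 N9 b"
| "nibble_and N10 b = case_nibble N0 N0 N2 N2 N0 N0 N2 N2 N8 N8 N10 N10 N8 N8 N10 N10 b"
| "nibble_and N11 b = case_nibble N0 N1 N2 N3 N0 N1 N2 N3 N8 N9 N10 N11 N8 N9 N10 N11 b"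
| "nibble_and N12 b = case_nibble N0 N0 N0 N0 N4 N4 N4 N4 N8 N8 N8 N8 N12 N12 N12 N12 b"
| "nibble_and N13 b = case_nibble N0 N1 N0 N1 N4 N5 N4 N5 N8 N9 N8 N9 N12 N13 N12 N13 b"
| "nibble_and N14 b = case_nibble N0 N0 N2 N2 N4 N4 N6 N6 N8 N8 N10 N10 N12 N12 N14 N14 b"
| "nibble_and N15 b = case_nibble N0 N1 N2 N3 N4 N5 N6 N7 N8 N9 N10 N11 N12 N13 N14 N15 b"

definition nibble_val :: "nibble \<Rightarrow> nat" where
  "nibble_val = case_nibble 0 1 2 3 4 5 6 7 8 9 10 11 12 13 14 15"

definition all_nibbles :: "nibble list" where
  "all_nibbles = [N0, N1, N2, N3, N4, N5, N6, N7, N8, N9, N10, N11, N12, N13, N14, N15]"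

lemma all_nibbles_nth_val: "all_nibbles ! nibble_val x = x"
  by (cases x) (simp_all add: all_nibbles_def nibble_val_def)

lemma nibble_val_less: "nibble_val x < 16"
  by (cases x) (simp_all add: nibble_val_def)

lemma set_all_nibbles: "set all_nibbles = UNIV"
proof -
  have "x \<in> set all_nibbles" for x
    by (cases x) (simp_all add: all_nibbles_def)
  then show ?thesis
    by blast
qed

lemma inj_nibble_val: "inj nibble_val"
  by (metis injI all_nibbles_nth_val)

instance nibble :: finite
  by standard (simp flip: set_all_nibbles)

instantiation nibble :: linorder
begin

definition less_eq_nibble :: "nibble \<Rightarrow> nibble \<Rightarrow> bool" where
  "x \<le> y \<longleftrightarrow> nibble_val x \<le> nibble_val y"

definition less_nibble :: "nibble \<Rightarrow> nibble \<Rightarrow> bool" where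
  "x < y \<longleftrightarrow> nibble_val x < nibble_val y"

instance
  by standard (auto simp: less_eq_nibble_def less_nibble_def inj_eq[OF inj_nibble_val])

end

lemma sorted_all_nibbles: "sorted_wrt (<) all_nibbles"
  by (simp add: all_nibbles_def less_nibble_def nibble_val_def)

lemma nibble_val_xor: "nibble_val (nibble_xor a b) = xor (nibble_val a) (nibble_val b)"
  by (cases a; cases b) (simp_all add: nibble_val_def)

lemma nibble_val_and: "nibble_val (nibble_and a b) = and (nibble_val a) (nibble_val b)"
  by (cases a; cases b) (simp_all add: nibble_val_def)

definition nibble_vec :: "nibble \<Rightarrow> bit^4" where
  "nibble_vec x = (\<chi> i. of_bool (bit (nibble_val x) (nat (Rep_bit0 i))))"

lemma of_bool_neq_bit: "(of_bool (P \<noteq> Q) :: bit) = of_bool P + of_bool Q"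
  by (cases P; cases Q) simp_all

lemma nibble_vec_xor: "nibble_vec (nibble_xor a b) = nibble_vec a + nibble_vec b"
  by (simp add: vec_eq_iff nibble_vec_def nibble_val_xor bit_xor_iff of_bool_neq_bit)

lemma nibble_vec_and: "nibble_vec (nibble_and a b) = nibble_vec a * nibble_vec b"
  by (simp add: vec_eq_iff nibble_vec_def nibble_val_and bit_and_iff times_vec_def)

lemma nibble_vec_N0: "nibble_vec N0 = 0"
  by (simp add: vec_eq_iff nibble_vec_def nibble_val_def)

lemma inj_nibble_vec: "inj nibble_vec"
proof (rule injI)
  fix a b
  assume eq: "nibble_vec a = nibble_vec b"
  have "bit (nibble_val a) k = bit (nibble_val b) k" if "k < 4" for k
  proof -
    have "nat (Rep_bit0 (Abs_bit0 (int k) :: 4)) = k"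
      using that by (simp add: Abs_bit0_inverse)
    then show ?thesis
      using eq by (simp add: vec_eq_iff nibble_vec_def) (metis of_bool_eq_iff)
  qed
  then have "take_bit 4 (nibble_val a) = take_bit 4 (nibble_val b)"
    by (auto simp: bit_eq_iff bit_take_bit_iff)
  then have "nibble_val a = nibble_val b"
    using nibble_val_less by (simp add: take_bit_nat_eq_self)
  then show "a = b"
    using inj_nibble_val by (simp add: inj_eq)
qed

lemma card_UNIV_bit: "CARD(bit) = 2"
proof -
  have "(UNIV :: bit set) = {0, 1}"
    by (auto intro: bit.exhaust)
  then have "CARD(bit) = card {0 :: bit, 1}"
    by (rule arg_cong)
  then show ?thesis
    by simp
qed

lemma bij_nibble_vec: "bij nibble_vec"
proof -
  have card_nibble: "CARD(nibble) = 16"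
    using sorted_all_nibbles
    by (simp flip: set_all_nibbles add: distinct_card strict_sorted_iff) (simp add: all_nibbles_def)
  have card_vec: "CARD(bit^4) = 16"
    by (simp add: CARD_vec card_UNIV_bit)
  then have "finite (UNIV :: (bit^4) set)"
    by (metis card.infinite zero_neq_numeral)
  moreover have "card (range nibble_vec) = CARD(bit^4)"
    using inj_nibble_vec card_nibble card_vec by (simp add: card_image)
  ultimately have "range nibble_vec = UNIV"
    by (intro card_subset_eq) simp_all
  then show ?thesis
    using inj_nibble_vec by (simp add: bij_def)
qed

primrec nibble_span :: "nibble list \<Rightarrow> nibble list" where
  "nibble_span [] = [N0]"
| "nibble_span (x # xs) = nibble_span xs @ map (nibble_xor x) (nibble_span xs)"

primrec nibbles_independent :: "nibble list \<Rightarrow> bool" where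
  "nibbles_independent [] \<longleftrightarrow> True"
| "nibbles_independent (x # xs) \<longleftrightarrow> x \<notin> set (nibble_span xs) \<and> nibbles_independent xs"

lemma nibble_vec_span: "nibble_vec ` set (nibble_span xs) = vec.span (nibble_vec ` set xs)"
proof (induction xs)
  case (Cons x xs)
  have "nibble_vec ` set (nibble_span (x # xs)) =
      nibble_vec ` set (nibble_span xs) \<union> (+) (nibble_vec x) ` nibble_vec ` set (nibble_span xs)"
    by (simp add: image_Un image_image nibble_vec_xor)
  then show ?case
    by (simp add: Cons.IH span_insert_bit)
qed (simp add: nibble_vec_N0)

lemma nibbles_independent_iff:
  "distinct xs \<Longrightarrow> nibbles_independent xs \<longleftrightarrow> vec.independent (nibble_vec ` set xs)"
proof (induction xs)
  case Nil
  then show ?case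
    by (simp add: vec.independent_empty)
next
  case (Cons x xs)
  have "nibble_vec x \<notin> nibble_vec ` set xs"
    using Cons.prems inj_nibble_vec by (simp add: inj_image_mem_iff)
  moreover have "nibble_vec x \<in> vec.span (nibble_vec ` set xs) \<longleftrightarrow> x \<in> set (nibble_span xs)"
    by (simp flip: nibble_vec_span add: inj_image_mem_iff[OF inj_nibble_vec])
  ultimately show ?case
    using Cons by (auto simp: vec.independent_insert)
qed

definition nibble_products :: "nibble \<times> nibble \<times> nibble \<times> nibble \<Rightarrow> nibble list" where
  "nibble_products =
    (\<lambda>(s, u, s', u'). [nibble_and a b. a \<leftarrow> nibble_span [s, u], b \<leftarrow> nibble_span [s', u']])"

lemma nibble_vec_products:
  "nibble_vec ` set (nibble_products (s, u, s', u')) =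
    hadamard_products (vec.span {nibble_vec s, nibble_vec u}) (vec.span {nibble_vec s', nibble_vec u'})"
proof -
  let ?A = "set (nibble_span [s, u])" and ?B = "set (nibble_span [s', u'])"
  have "nibble_vec ` set (nibble_products (s, u, s', u')) =
      hadamard_products (nibble_vec ` ?A) (nibble_vec ` ?B)"
  proof (intro set_eqI iffI)
    fix z
    assume "z \<in> nibble_vec ` set (nibble_products (s, u, s', u'))"
    then obtain a b where "a \<in> ?A" "b \<in> ?B" "z = nibble_vec (nibble_and a b)"
      by (auto simp: nibble_products_def simp del: nibble_span.simps)
    then show "z \<in> hadamard_products (nibble_vec ` ?A) (nibble_vec ` ?B)"
      by (auto simp: hadamard_products_def nibble_vec_and)
  next
    fix z
    assume "z \<in> hadamard_products (nibble_vec ` ?A) (nibble_vec ` ?B)"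
    then obtain a b where "a \<in> ?A" "b \<in> ?B" "z = nibble_vec a * nibble_vec b"
      by (auto simp: hadamard_products_def)
    then show "z \<in> nibble_vec ` set (nibble_products (s, u, s', u'))"
      by (force simp: nibble_products_def nibble_vec_and simp del: nibble_span.simps)
  qed
  then show ?thesis
    by (simp only: nibble_vec_span) simp
qed

section \<open>Maximal product sets\<close>

text \<open>
  The 80 maximal product sets of two planes, as truth tables indexed by \<open>chunk \<times> nibble\<close> so
  that membership is decided by two case distinctions, together with bases of two planes generating
  each of them. Entry \<open>(i, j)\<close> of \<open>covering_table\<close> indexes a maximal product set containing
  the product set of the \<open>i\<close>-th and the \<open>j\<close>-th of the \<open>planes\<close>.
\<close>

datatype chunk = C0 | C1 | C2 | C3 | C4

primrec maximal_product :: "chunk \<Rightarrow> nibble \<Rightarrow> nibble \<Rightarrow> bool" where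
  "maximal_product C0 = case_nibble
     (case_nibble True True True True True True False False True False True False True False False True)
     (case_nibble True True True True True True False False True False True False False True True False)
     (case_nibble True True True True True True False False True False False True True False True False)
     (case_nibble True True True True True True False False False True True False True False True False)
     (case_nibble True True True True True False True False True True False False True False False True)
     (case_nibble True True True True True False True False True True False False False True True False)
     (case_nibble True True True True True False True False True False False True True True False False)
     (case_nibble True True True True True False True False False True True False True True False False)
     (case_nibble True True True True True False False True True True False False True False True False)
     (case_nibble True True True True True False False True True False True False True True False False)
     (case_nibble True True True True False True True False True True False False True False True False)
     (case_nibble True True True True False True True False True False True False True True False False)
     (case_nibble True True True False True True True False True True True False False False False True)
     (case_nibble True True True False True True True False True True False True False False True False)
     (case_nibble True True True False True True True False True False True True False True False False)
     (case_nibble True True True False True True True False False True True True True False False False)"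
| "maximal_product C1 = case_nibble
     (case_nibble True True True False True True False True True True True False False False True False)
     (case_nibble True True True False True True False True True False True True True False False False)
     (case_nibble True True True False True False True True True True True False False True False False)
     (case_nibble True True True False True False True True True True False True True False False False)
     (case_nibble True True True False False True True True True True True False True False False False)
     (case_nibble True True False True True True True False True True True False False False True False)
     (case_nibble True True False True True True True False True False True True True False False False)
     (case_nibble True True False True True False True True True True True False True False False False)
     (case_nibble True False True True True True True False True True True False False True False False)
     (case_nibble True False True True True True True False True True False True True False False False)
     (case_nibble True False True True True True False True True True True False True False False False)
     (case_nibble True True True True True True True False False False False False False False False False)
     (case_nibble True True True True True True False True False False False False False False False False)
     (case_nibble True True True True True False True True False False False False False False False False)
     (case_nibble True True True True False False False False True True True False False False False False)
     (case_nibble True True True True False False False False True True False True False False False False)"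
| "maximal_product C2 = case_nibble
     (case_nibble True True True True False False False False True False True True False False False False)
     (case_nibble True True True True False False False False False False False False True True True False)
     (case_nibble True True True True False False False False False False False False True True False True)
     (case_nibble True True True True False False False False False False False False True False True True)
     (case_nibble True True True False True True True True False False False False False False False False)
     (case_nibble True True True False False False False False True True True True False False False False)
     (case_nibble True True True False False False False False False False False False True True True True)
     (case_nibble True True False False True True False False True True False False True False False False)
     (case_nibble True True False False True True False False True True False False False True False False)
     (case_nibble True True False False True True False False True False False False True True False False)
     (case_nibble True True False False True True False False False False True True False False True False)
     (case_nibble True True False False True True False False False False True True False False False True)
     (case_nibble True True False False True True False False False False True False False False True True)
     (case_nibble True True False False True False False False True True False False True True False False)
     (case_nibble True True False False True False False False False False True True False False True True)
     (case_nibble True True False False False False True True True True False False False False True False)"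
| "maximal_product C3 = case_nibble
     (case_nibble True True False False False False True True True True False False False False False True)
     (case_nibble True True False False False False True True True False False False False False True True)
     (case_nibble True True False False False False True True False False True True True False False False)
     (case_nibble True True False False False False True True False False True False True True False False)
     (case_nibble True True False False False False True False True True False False False False True True)
     (case_nibble True True False False False False True False False False True True True True False False)
     (case_nibble True False True False True False True False True False True False True False False False)
     (case_nibble True False True False True False True False True False True False False False True False)
     (case_nibble True False True False True False True False True False False False True False True False)
     (case_nibble True False True False True False True False False True False True False True False False)
     (case_nibble True False True False True False True False False True False True False False False True)
     (case_nibble True False True False True False True False False True False False False True False True)
     (case_nibble True False True False True False False False True False True False True False True False)
     (case_nibble True False True False True False False False False True False True False True False True)
     (case_nibble True False True False False True False True True False True False False True False False)
     (case_nibble True False True False False True False True True False True False False False False True)"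
| "maximal_product C4 = case_nibble
     (case_nibble True False True False False True False True True False False False False True False True)
     (case_nibble True False True False False True False True False True False True True False False False)
     (case_nibble True False True False False True False True False True False False True False True False)
     (case_nibble True False True False False True False False True False True False False True False True)
     (case_nibble True False True False False True False False False True False True True False True False)
     (case_nibble True False False True True False False True True False False True True False False False)
     (case_nibble True False False True True False False True True False False True False False False True)
     (case_nibble True False False True True False False True True False False False True False False True)
     (case_nibble True False False True True False False True False True True False False True False False)
     (case_nibble True False False True True False False True False True True False False False True False)
     (case_nibble True False False True True False False False True False False True True False False True)
     (case_nibble True False False True True False False False False True True False False True True False)
     (case_nibble True False False True False True True False True False False True False True False False)
     (case_nibble True False False True False True True False True False False True False False True False)
     (case_nibble True False False True False True True False True False False False False True True False)
     (case_nibble True False False True False True True False False True True False True False False False)"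

primrec maximal_generator :: "chunk \<Rightarrow> nibble \<Rightarrow> nibble \<times> nibble \<times> nibble \<times> nibble" where
  "maximal_generator C0 = case_nibble
     (N5, N10, N3, N12) (N5, N10, N3, N13) (N5, N11, N3, N12) (N5, N11, N3, N13)
     (N6, N9, N3, N12) (N6, N9, N3, N13) (N6, N11, N3, N12) (N6, N11, N3, N13)
     (N7, N9, N3, N12) (N7, N10, N3, N12) (N7, N9, N3, N13) (N7, N10, N3, N13)
     (N6, N9, N5, N10) (N6, N9, N5, N11) (N5, N10, N6, N11) (N5, N11, N6, N11)"
| "maximal_generator C1 = case_nibble
     (N7, N9, N5, N10) (N5, N10, N7, N11) (N6, N9, N7, N10) (N6, N9, N7, N11)
     (N7, N9, N7, N10) (N7, N9, N5, N11) (N5, N11, N7, N11) (N7, N9, N7, N11)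
     (N7, N10, N6, N11) (N6, N11, N7, N11) (N7, N10, N7, N11) (N3, N4, N3, N5)
     (N3, N4, N2, N5) (N3, N4, N1, N6) (N3, N8, N3, N9) (N3, N8, N2, N9)"
| "maximal_generator C2 = case_nibble
     (N3, N8, N1, N10) (N3, N12, N3, N13) (N3, N12, N2, N13) (N3, N12, N1, N14)
     (N2, N5, N1, N6) (N2, N9, N1, N10) (N2, N13, N1, N14) (N5, N8, N5, N9)
     (N5, N8, N4, N9) (N5, N8, N1, N12) (N5, N10, N5, N11) (N5, N10, N4, N11)
     (N5, N10, N1, N14) (N4, N9, N1, N12) (N4, N11, N1, N14) (N7, N8, N7, N9)"
| "maximal_generator C3 = case_nibble
     (N7, N8, N6, N9) (N7, N8, N1, N14) (N7, N11, N1, N14) (N7, N10, N1, N14)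
     (N6, N9, N1, N14) (N6, N11, N1, N14) (N6, N8, N6, N10) (N6, N8, N4, N10)
     (N6, N8, N2, N12) (N6, N9, N6, N11) (N6, N9, N4, N11) (N6, N9, N2, N13)
     (N4, N10, N2, N12) (N4, N11, N2, N13) (N7, N8, N7, N10) (N7, N8, N5, N10)"
| "maximal_generator C4 = case_nibble
     (N7, N8, N2, N13) (N7, N11, N2, N13) (N7, N9, N2, N13) (N5, N10, N2, N13)
     (N5, N11, N2, N13) (N7, N8, N7, N11) (N7, N8, N4, N11) (N7, N8, N3, N12)
     (N7, N10, N4, N11) (N7, N9, N4, N11) (N4, N11, N3, N12) (N4, N11, N3, N13)
     (N7, N8, N6, N11) (N7, N8, N5, N11) (N7, N8, N3, N13) (N7, N9, N6, N11)"

declare maximal_product.simps [simp del] maximal_generator.simps [simp del]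

definition planes :: "(nibble \<times> nibble) list" where
  "planes = [
    (N1, N2), (N1, N4), (N2, N4), (N3, N4), (N2, N5), (N3, N5), (N1, N6), (N1, N8), (N2, N8),
    (N3, N8), (N4, N8), (N5, N8), (N6, N8), (N7, N8), (N2, N9), (N3, N9), (N4, N9), (N5, N9),
    (N6, N9), (N7, N9), (N1, N10), (N4, N10), (N5, N10), (N6, N10), (N7, N10), (N4, N11), (N5, N11),
    (N6, N11), (N7, N11), (N1, N12), (N2, N12), (N3, N12), (N2, N13), (N3, N13), (N1, N14)]"

definition covering_table :: "(chunk \<times> nibble) list list" where
  "covering_table = [
    [(C0, N0), (C0, N0), (C0, N0), (C0, N0), (C0, N0), (C0, N0), (C0, N0), (C0, N0), (C0, N0), (C0, N0), (C0, N0), (C0, N0), (C0, N0), (C0, N0), (C0, N0), (C0, N0), (C0, N0), (C0, N0), (C0, N0), (C0, N0), (C0, N0), (C0, N0), (C0, N0), (C0, N0), (C0, N0), (C0, N0), (C0, N0), (C0, N0), (C0, N0), (C0, N0), (C0, N0), (C0, N0), (C0, N0), (C0, N0), (C0, N0)],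
    [(C0, N0), (C0, N0), (C0, N0), (C0, N0), (C0, N0), (C0, N0), (C0, N0), (C0, N0), (C0, N0), (C0, N0), (C0, N0), (C0, N0), (C0, N0), (C0, N0), (C0, N0), (C0, N0), (C0, N0), (C0, N0), (C0, N0), (C0, N0), (C0, N0), (C0, N0), (C0, N0), (C0, N0), (C0, N0), (C0, N0), (C0, N0), (C0, N0), (C0, N0), (C0, N0), (C0, N0), (C0, N0), (C0, N0), (C0, N0), (C0, N0)],
    [(C0, N0), (C0, N0), (C0, N4), (C0, N4), (C0, N4), (C0, N4), (C0, N4), (C0, N0), (C0, N0), (C0, N0), (C0, N0), (C0, N0), (C0, N4), (C0, N4), (C0, N0), (C0, N0), (C0, N0), (C0, N0), (C0, N4), (C0, N4), (C0, N0), (C0, N4), (C0, N4), (C0, N4), (C0, N4), (C0, N4), (C0, N4), (C0, N4), (C0, N4), (C0, N0), (C0, N4), (C0, N4), (C0, N4), (C0, N4), (C0, N4)],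
    [(C0, N0), (C0, N0), (C0, N4), (C0, N8), (C1, N12), (C1, N11), (C1, N13), (C0, N0), (C0, N0), (C0, N0), (C0, N0), (C0, N0), (C0, N4), (C0, N8), (C0, N0), (C0, N0), (C0, N0), (C0, N0), (C1, N13), (C1, N13), (C0, N0), (C0, N4), (C1, N12), (C0, N4), (C1, N12), (C0, N8), (C1, N11), (C1, N11), (C0, N8), (C0, N0), (C0, N4), (C0, N8), (C1, N12), (C1, N11), (C1, N13)],
    [(C0, N0), (C0, N0), (C0, N4), (C1, N12), (C1, N0), (C1, N11), (C2, N4), (C0, N0), (C0, N0), (C0, N0), (C0, N0), (C0, N0), (C0, N4), (C1, N0), (C0, N0), (C0, N0), (C0, N0), (C0, N0), (C2, N4), (C2, N4), (C0, N0), (C0, N4), (C1, N0), (C0, N4), (C1, N0), (C1, N12), (C1, N11), (C1, N11), (C1, N12), (C0, N0), (C0, N4), (C1, N12), (C1, N0), (C1, N11), (C2, N4)],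
    [(C0, N0), (C0, N0), (C0, N4), (C1, N11), (C1, N11), (C1, N11), (C1, N11), (C0, N0), (C0, N0), (C0, N0), (C0, N0), (C0, N0), (C0, N4), (C0, N10), (C0, N0), (C0, N0), (C0, N0), (C0, N0), (C1, N11), (C1, N11), (C0, N0), (C0, N4), (C1, N11), (C0, N4), (C1, N11), (C1, N11), (C1, N11), (C1, N11), (C1, N11), (C0, N0), (C0, N4), (C1, N11), (C1, N11), (C1, N11), (C1, N11)],
    [(C0, N0), (C0, N0), (C0, N4), (C1, N13), (C2, N4), (C1, N11), (C1, N2), (C0, N0), (C0, N0), (C0, N0), (C0, N0), (C0, N0), (C0, N4), (C1, N2), (C0, N0), (C0, N0), (C0, N0), (C0, N0), (C1, N2), (C1, N2), (C0, N0), (C0, N4), (C2, N4), (C0, N4), (C2, N4), (C1, N13), (C1, N11), (C1, N11), (C1, N13), (C0, N0), (C0, N4), (C1, N13), (C2, N4), (C1, N11), (C1, N2)],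
    [(C0, N0), (C0, N0), (C0, N0), (C0, N0), (C0, N0), (C0, N0), (C0, N0), (C0, N4), (C0, N0), (C0, N4), (C0, N0), (C0, N4), (C0, N0), (C0, N4), (C0, N4), (C0, N4), (C0, N4), (C0, N4), (C0, N4), (C0, N4), (C0, N4), (C0, N0), (C0, N4), (C0, N0), (C0, N4), (C0, N4), (C0, N4), (C0, N4), (C0, N4), (C0, N4), (C0, N0), (C0, N4), (C0, N4), (C0, N4), (C0, N4)],
    [(C0, N0), (C0, N0), (C0, N0), (C0, N0), (C0, N0), (C0, N0), (C0, N0), (C0, N0), (C0, N0), (C0, N0), (C0, N0), (C0, N0), (C0, N0), (C0, N0), (C0, N0), (C0, N0), (C0, N0), (C0, N0), (C0, N0), (C0, N0), (C0, N0), (C0, N0), (C0, N0), (C0, N0), (C0, N0), (C0, N0), (C0, N0), (C0, N0), (C0, N0), (C0, N0), (C0, N0), (C0, N0), (C0, N0), (C0, N0), (C0, N0)],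
    [(C0, N0), (C0, N0), (C0, N0), (C0, N0), (C0, N0), (C0, N0), (C0, N0), (C0, N4), (C0, N0), (C0, N2), (C0, N0), (C0, N4), (C0, N0), (C0, N2), (C1, N15), (C1, N14), (C0, N4), (C0, N4), (C1, N15), (C1, N14), (C2, N0), (C0, N0), (C2, N0), (C0, N0), (C1, N14), (C0, N2), (C2, N0), (C1, N15), (C0, N2), (C0, N4), (C0, N0), (C0, N2), (C1, N15), (C1, N14), (C2, N0)],
    [(C0, N0), (C0, N0), (C0, N0), (C0, N0), (C0, N0), (C0, N0), (C0, N0), (C0, N0), (C0, N0), (C0, N0), (C0, N0), (C0, N0), (C0, N0), (C0, N0), (C0, N0), (C0, N0), (C0, N0), (C0, N0), (C0, N0), (C0, N0), (C0, N0), (C0, N0), (C0, N0), (C0, N0), (C0, N0), (C0, N0), (C0, N0), (C0, N0), (C0, N0), (C0, N0), (C0, N0), (C0, N0), (C0, N0), (C0, N0), (C0, N0)],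
    [(C0, N0), (C0, N0), (C0, N0), (C0, N0), (C0, N0), (C0, N0), (C0, N0), (C0, N4), (C0, N0), (C0, N4), (C0, N0), (C0, N1), (C0, N0), (C0, N1), (C0, N4), (C0, N4), (C2, N8), (C2, N7), (C2, N8), (C2, N7), (C0, N4), (C0, N0), (C0, N1), (C0, N0), (C0, N1), (C2, N8), (C2, N7), (C2, N8), (C2, N7), (C2, N9), (C0, N0), (C2, N9), (C0, N1), (C2, N9), (C2, N9)],
    [(C0, N0), (C0, N0), (C0, N4), (C0, N4), (C0, N4), (C0, N4), (C0, N4), (C0, N0), (C0, N0), (C0, N0), (C0, N0), (C0, N0), (C0, N5), (C0, N5), (C0, N0), (C0, N0), (C0, N0), (C0, N0), (C0, N5), (C0, N5), (C0, N0), (C3, N7), (C3, N7), (C3, N6), (C3, N6), (C3, N7), (C3, N7), (C3, N6), (C3, N6), (C0, N0), (C3, N8), (C3, N8), (C3, N8), (C3, N8), (C0, N5)],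
    [(C0, N0), (C0, N0), (C0, N4), (C0, N8), (C1, N0), (C0, N10), (C1, N2), (C0, N4), (C0, N0), (C0, N2), (C0, N0), (C0, N1), (C0, N5), (C3, N0), (C1, N15), (C1, N14), (C2, N8), (C2, N7), (C3, N0), (C2, N15), (C2, N0), (C3, N7), (C3, N15), (C3, N6), (C3, N14), (C4, N6), (C4, N13), (C4, N12), (C4, N5), (C2, N9), (C3, N8), (C4, N7), (C4, N0), (C4, N14), (C3, N1)],
    [(C0, N0), (C0, N0), (C0, N0), (C0, N0), (C0, N0), (C0, N0), (C0, N0), (C0, N4), (C0, N0), (C1, N15), (C0, N0), (C0, N4), (C0, N0), (C1, N15), (C0, N13), (C1, N14), (C0, N3), (C0, N4), (C0, N13), (C1, N14), (C2, N5), (C0, N0), (C2, N5), (C0, N0), (C1, N14), (C0, N13), (C2, N5), (C0, N13), (C1, N15), (C0, N4), (C0, N0), (C1, N15), (C0, N13), (C1, N14), (C2, N5)],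
    [(C0, N0), (C0, N0), (C0, N0), (C0, N0), (C0, N0), (C0, N0), (C0, N0), (C0, N4), (C0, N0), (C1, N14), (C0, N0), (C0, N4), (C0, N0), (C1, N14), (C1, N14), (C1, N14), (C0, N4), (C0, N4), (C1, N14), (C1, N14), (C1, N14), (C0, N0), (C1, N14), (C0, N0), (C1, N14), (C0, N3), (C1, N14), (C1, N14), (C1, N14), (C0, N4), (C0, N0), (C1, N14), (C1, N14), (C1, N14), (C1, N14)],
    [(C0, N0), (C0, N0), (C0, N0), (C0, N0), (C0, N0), (C0, N0), (C0, N0), (C0, N4), (C0, N0), (C0, N4), (C0, N0), (C2, N8), (C0, N0), (C2, N8), (C0, N3), (C0, N4), (C0, N5), (C2, N7), (C0, N5), (C2, N7), (C0, N4), (C0, N0), (C2, N8), (C0, N0), (C2, N8), (C0, N5), (C2, N7), (C0, N5), (C2, N7), (C2, N13), (C0, N0), (C2, N13), (C0, N5), (C2, N13), (C2, N13)],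
    [(C0, N0), (C0, N0), (C0, N0), (C0, N0), (C0, N0), (C0, N0), (C0, N0), (C0, N4), (C0, N0), (C0, N4), (C0, N0), (C2, N7), (C0, N0), (C2, N7), (C0, N4), (C0, N4), (C2, N7), (C2, N7), (C2, N7), (C2, N7), (C0, N4), (C0, N0), (C2, N7), (C0, N0), (C2, N7), (C2, N7), (C2, N7), (C2, N7), (C2, N7), (C2, N7), (C0, N0), (C2, N7), (C0, N3), (C2, N7), (C2, N7)],
    [(C0, N0), (C0, N0), (C0, N4), (C1, N13), (C2, N4), (C1, N11), (C1, N2), (C0, N4), (C0, N0), (C1, N15), (C0, N0), (C2, N8), (C0, N5), (C3, N0), (C0, N13), (C1, N14), (C0, N5), (C2, N7), (C0, N4), (C2, N15), (C2, N5), (C3, N7), (C0, N12), (C3, N6), (C1, N2), (C3, N10), (C0, N13), (C3, N9), (C1, N3), (C2, N13), (C3, N8), (C0, N4), (C3, N11), (C0, N5), (C3, N4)],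
    [(C0, N0), (C0, N0), (C0, N4), (C1, N13), (C2, N4), (C1, N11), (C1, N2), (C0, N4), (C0, N0), (C1, N14), (C0, N0), (C2, N7), (C0, N5), (C2, N15), (C1, N14), (C1, N14), (C2, N7), (C2, N7), (C2, N15), (C2, N15), (C1, N14), (C3, N7), (C1, N0), (C3, N6), (C1, N4), (C4, N9), (C1, N5), (C4, N15), (C1, N7), (C2, N7), (C3, N8), (C0, N8), (C4, N2), (C0, N10), (C2, N15)],
    [(C0, N0), (C0, N0), (C0, N0), (C0, N0), (C0, N0), (C0, N0), (C0, N0), (C0, N4), (C0, N0), (C2, N0), (C0, N0), (C0, N4), (C0, N0), (C2, N0), (C2, N5), (C1, N14), (C0, N4), (C0, N4), (C2, N5), (C1, N14), (C0, N14), (C0, N0), (C0, N14), (C0, N0), (C1, N14), (C0, N14), (C0, N14), (C2, N5), (C2, N0), (C0, N4), (C0, N0), (C2, N0), (C2, N5), (C1, N14), (C0, N14)],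
    [(C0, N0), (C0, N0), (C0, N4), (C0, N4), (C0, N4), (C0, N4), (C0, N4), (C0, N0), (C0, N0), (C0, N0), (C0, N0), (C0, N0), (C3, N7), (C3, N7), (C0, N0), (C0, N0), (C0, N0), (C0, N0), (C3, N7), (C3, N7), (C0, N0), (C0, N1), (C0, N1), (C3, N6), (C3, N6), (C0, N1), (C0, N1), (C3, N6), (C3, N6), (C0, N0), (C3, N12), (C3, N12), (C3, N12), (C3, N12), (C0, N1)],
    [(C0, N0), (C0, N0), (C0, N4), (C1, N12), (C1, N0), (C1, N11), (C2, N4), (C0, N4), (C0, N0), (C2, N0), (C0, N0), (C0, N1), (C3, N7), (C3, N15), (C2, N5), (C1, N14), (C2, N8), (C2, N7), (C0, N12), (C1, N0), (C0, N14), (C0, N1), (C0, N0), (C3, N6), (C3, N14), (C2, N11), (C2, N10), (C0, N14), (C1, N1), (C2, N9), (C3, N12), (C0, N0), (C4, N3), (C0, N1), (C2, N12)],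
    [(C0, N0), (C0, N0), (C0, N4), (C0, N4), (C0, N4), (C0, N4), (C0, N4), (C0, N0), (C0, N0), (C0, N0), (C0, N0), (C0, N0), (C3, N6), (C3, N6), (C0, N0), (C0, N0), (C0, N0), (C0, N0), (C3, N6), (C3, N6), (C0, N0), (C3, N6), (C3, N6), (C3, N6), (C3, N6), (C3, N6), (C3, N6), (C3, N6), (C3, N6), (C0, N0), (C3, N6), (C3, N6), (C3, N6), (C3, N6), (C0, N7)],
    [(C0, N0), (C0, N0), (C0, N4), (C1, N12), (C1, N0), (C1, N11), (C2, N4), (C0, N4), (C0, N0), (C1, N14), (C0, N0), (C0, N1), (C3, N6), (C3, N14), (C1, N14), (C1, N14), (C2, N8), (C2, N7), (C1, N2), (C1, N4), (C1, N14), (C3, N6), (C3, N14), (C3, N6), (C3, N14), (C4, N8), (C4, N15), (C1, N8), (C1, N10), (C2, N9), (C3, N6), (C0, N9), (C3, N14), (C0, N11), (C3, N3)],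
    [(C0, N0), (C0, N0), (C0, N4), (C0, N8), (C1, N12), (C1, N11), (C1, N13), (C0, N4), (C0, N0), (C0, N2), (C0, N0), (C2, N8), (C3, N7), (C4, N6), (C0, N13), (C0, N3), (C0, N5), (C2, N7), (C3, N10), (C4, N9), (C0, N14), (C0, N1), (C2, N11), (C3, N6), (C4, N8), (C2, N11), (C2, N10), (C3, N9), (C4, N5), (C2, N13), (C3, N12), (C4, N10), (C3, N13), (C4, N11), (C2, N14)],
    [(C0, N0), (C0, N0), (C0, N4), (C1, N11), (C1, N11), (C1, N11), (C1, N11), (C0, N4), (C0, N0), (C2, N0), (C0, N0), (C2, N7), (C3, N7), (C4, N13), (C2, N5), (C1, N14), (C2, N7), (C2, N7), (C0, N13), (C1, N5), (C0, N14), (C0, N1), (C2, N10), (C3, N6), (C4, N15), (C2, N10), (C2, N10), (C0, N15), (C1, N6), (C2, N7), (C3, N12), (C0, N2), (C4, N4), (C0, N3), (C2, N10)],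
    [(C0, N0), (C0, N0), (C0, N4), (C1, N11), (C1, N11), (C1, N11), (C1, N11), (C0, N4), (C0, N0), (C1, N15), (C0, N0), (C2, N8), (C3, N6), (C4, N12), (C0, N13), (C1, N14), (C0, N5), (C2, N7), (C3, N9), (C4, N15), (C2, N5), (C3, N6), (C0, N14), (C3, N6), (C1, N8), (C3, N9), (C0, N15), (C3, N9), (C1, N9), (C2, N13), (C3, N6), (C0, N6), (C3, N9), (C0, N7), (C3, N5)],
    [(C0, N0), (C0, N0), (C0, N4), (C0, N8), (C1, N12), (C1, N11), (C1, N13), (C0, N4), (C0, N0), (C0, N2), (C0, N0), (C2, N7), (C3, N6), (C4, N5), (C1, N15), (C1, N14), (C2, N7), (C2, N7), (C1, N3), (C1, N7), (C2, N0), (C3, N6), (C1, N1), (C3, N6), (C1, N10), (C4, N5), (C1, N6), (C1, N9), (C4, N5), (C2, N7), (C3, N6), (C4, N5), (C4, N1), (C4, N15), (C3, N2)],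
    [(C0, N0), (C0, N0), (C0, N0), (C0, N0), (C0, N0), (C0, N0), (C0, N0), (C0, N4), (C0, N0), (C0, N4), (C0, N0), (C2, N9), (C0, N0), (C2, N9), (C0, N4), (C0, N4), (C2, N13), (C2, N7), (C2, N13), (C2, N7), (C0, N4), (C0, N0), (C2, N9), (C0, N0), (C2, N9), (C2, N13), (C2, N7), (C2, N13), (C2, N7), (C0, N6), (C0, N0), (C0, N6), (C0, N6), (C0, N6), (C0, N6)],
    [(C0, N0), (C0, N0), (C0, N4), (C0, N4), (C0, N4), (C0, N4), (C0, N4), (C0, N0), (C0, N0), (C0, N0), (C0, N0), (C0, N0), (C3, N8), (C3, N8), (C0, N0), (C0, N0), (C0, N0), (C0, N0), (C3, N8), (C3, N8), (C0, N0), (C3, N12), (C3, N12), (C3, N6), (C3, N6), (C3, N12), (C3, N12), (C3, N6), (C3, N6), (C0, N0), (C0, N2), (C0, N2), (C0, N2), (C0, N2), (C0, N2)],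
    [(C0, N0), (C0, N0), (C0, N4), (C0, N8), (C1, N12), (C1, N11), (C1, N13), (C0, N4), (C0, N0), (C0, N2), (C0, N0), (C2, N9), (C3, N8), (C4, N7), (C1, N15), (C1, N14), (C2, N13), (C2, N7), (C0, N4), (C0, N8), (C2, N0), (C3, N12), (C0, N0), (C3, N6), (C0, N9), (C4, N10), (C0, N2), (C0, N6), (C4, N5), (C0, N6), (C0, N2), (C0, N0), (C2, N2), (C2, N1), (C2, N3)],
    [(C0, N0), (C0, N0), (C0, N4), (C1, N12), (C1, N0), (C1, N11), (C2, N4), (C0, N4), (C0, N0), (C1, N15), (C0, N0), (C0, N1), (C3, N8), (C4, N0), (C0, N13), (C1, N14), (C0, N5), (C0, N3), (C3, N11), (C4, N2), (C2, N5), (C3, N12), (C4, N3), (C3, N6), (C3, N14), (C3, N13), (C4, N4), (C3, N9), (C4, N1), (C0, N6), (C0, N2), (C2, N2), (C2, N2), (C2, N1), (C2, N6)],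
    [(C0, N0), (C0, N0), (C0, N4), (C1, N11), (C1, N11), (C1, N11), (C1, N11), (C0, N4), (C0, N0), (C1, N14), (C0, N0), (C2, N9), (C3, N8), (C4, N14), (C1, N14), (C1, N14), (C2, N13), (C2, N7), (C0, N5), (C0, N10), (C1, N14), (C3, N12), (C0, N1), (C3, N6), (C0, N11), (C4, N11), (C0, N3), (C0, N7), (C4, N15), (C0, N6), (C0, N2), (C2, N1), (C2, N1), (C2, N1), (C2, N1)],
    [(C0, N0), (C0, N0), (C0, N4), (C1, N13), (C2, N4), (C1, N11), (C1, N2), (C0, N4), (C0, N0), (C2, N0), (C0, N0), (C2, N9), (C0, N5), (C3, N1), (C2, N5), (C1, N14), (C2, N13), (C2, N7), (C3, N4), (C2, N15), (C0, N14), (C0, N1), (C2, N12), (C0, N7), (C3, N3), (C2, N14), (C2, N10), (C3, N5), (C3, N2), (C0, N6), (C0, N2), (C2, N3), (C2, N6), (C2, N1), (C2, N3)]]"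

text \<open>
  Under \<open>if_weak_cong\<close> only the branch selected by the condition is simplified, so evaluation with
  these rules stops at the first decisive list element.
\<close>

lemma short_circuit_evaluation:
  "list_all P [] \<longleftrightarrow> True"
  "list_all P (x # xs) \<longleftrightarrow> (if P x then list_all P xs else False)"
  "list_ex P' [] \<longleftrightarrow> False"
  "list_ex P' (x' # xs') \<longleftrightarrow> (if P' x' then True else list_ex P' xs')"
  "list_all2 Q [] [] \<longleftrightarrow> True"
  "list_all2 Q (a # as) (b # bs) \<longleftrightarrow> (if Q a b then list_all2 Q as bs else False)"
  "z \<in> set [] \<longleftrightarrow> False"
  "z \<in> set (y # ys) \<longleftrightarrow> (if z = y then True else z \<in> set ys)"
  by simp_all

lemmas nibble_evaluation =
  short_circuit_evaluation nibble_span.simps nibble_xor.simps nibble_and.simps nibble.case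
  nibble.distinct prod.case fst_conv snd_conv list.map append.simps concat.simps
  if_True if_False simp_thms

lemma planes_cover_eval:
  "list_all (\<lambda>x. list_all (\<lambda>y. list_ex (\<lambda>(u, w).
      list_all (\<lambda>z. z \<in> set (nibble_span [u, w])) (nibble_span [x, y])) planes) all_nibbles) all_nibbles"
  by (simp only: all_nibbles_def planes_def nibble_evaluation cong: if_weak_cong)

lemma covering_table_eval:
  "list_all2 (\<lambda>U row. list_all2 (\<lambda>W (c, n).
      list_all (maximal_product c n) (nibble_products (fst U, snd U, fst W, snd W))) planes row)
    planes covering_table"
  by (simp only: planes_def covering_table_def nibble_products_def maximal_product.simps
      nibble_evaluation cong: if_weak_cong)

lemma maximal_product_eval:
  "list_all (\<lambda>c. list_all (\<lambda>n. list_all (\<lambda>x. if maximal_product c n x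
      then x \<in> set (nibble_products (maximal_generator c n)) else True) all_nibbles) all_nibbles)
    [C0, C1, C2, C3, C4]"
  by (simp only: all_nibbles_def nibble_products_def maximal_product.simps maximal_generator.simps
      nibble_evaluation cong: if_weak_cong)

lemma list_all2_obtain_right:
  assumes "list_all2 P xs ys" "x \<in> set xs"
  obtains y where "y \<in> set ys" "P x y"
  using assms by (metis in_set_impl_in_set_zip1 list_all2_iff set_zip_rightD case_prodD)

lemma span_pair_in_plane:
  obtains u w where "(u, w) \<in> set planes" "set (nibble_span [x, y]) \<subseteq> set (nibble_span [u, w])"
proof -
  have "\<exists>(u, w) \<in> set planes. set (nibble_span [x, y]) \<subseteq> set (nibble_span [u, w])"
    using planes_cover_eval unfolding list_all_iff list_ex_iff set_all_nibbles subset_code(1)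
    by blast
  then show thesis
    using that by blast
qed

lemma plane_products_in_maximal_product:
  assumes "(u, w) \<in> set planes" "(u', w') \<in> set planes"
  obtains c n where "set (nibble_products (u, w, u', w')) \<subseteq> {x. maximal_product c n x}"
proof -
  obtain row where "list_all2 (\<lambda>W (c, n).
      list_all (maximal_product c n) (nibble_products (u, w, fst W, snd W))) planes row"
    using list_all2_obtain_right[OF covering_table_eval assms(1)] by auto
  then obtain cn where "(\<lambda>W (c, n).
      list_all (maximal_product c n) (nibble_products (u, w, fst W, snd W))) (u', w') cn"
    using assms(2) by (rule list_all2_obtain_right)
  then show thesis
    using that by (cases cn) (auto simp: list_all_iff)
qed

lemma maximal_product_subset_products:
  "{x. maximal_product c n x} \<subseteq> set (nibble_products (maximal_generator c n))"
  using maximal_product_eval by (cases c) (auto simp: list_all_iff set_all_nibbles split: if_splits)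

lemma nibble_products_mono:
  assumes "set (nibble_span [s, u]) \<subseteq> set (nibble_span [p, q])"
    and "set (nibble_span [s', u']) \<subseteq> set (nibble_span [p', q'])"
  shows "set (nibble_products (s, u, s', u')) \<subseteq> set (nibble_products (p, q, p', q'))"
  using assms unfolding nibble_products_def by (auto simp del: nibble_span.simps)

lemma hadamard_22_rows_nibbles_iff:
  "hadamard_22_rows (nibble_vec ` T) \<longleftrightarrow> (\<exists>c n. T \<subseteq> {x. maximal_product c n x})"
  unfolding hadamard_22_rows_def
proof
  assume "\<exists>x y x' y'. nibble_vec ` T \<subseteq> hadamard_products (vec.span {x, y}) (vec.span {x', y'})"
  moreover have "\<forall>x. \<exists>s. x = nibble_vec s"
    using bij_nibble_vec by (metis bij_pointE)
  ultimately obtain s u s' u' where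
    "nibble_vec ` T \<subseteq> hadamard_products (vec.span {nibble_vec s, nibble_vec u}) (vec.span {nibble_vec s', nibble_vec u'})"
    by metis
  then have T: "T \<subseteq> set (nibble_products (s, u, s', u'))"
    by (simp flip: nibble_vec_products add: inj_image_subset_iff[OF inj_nibble_vec])
  obtain p q where pq: "(p, q) \<in> set planes" "set (nibble_span [s, u]) \<subseteq> set (nibble_span [p, q])"
    by (rule span_pair_in_plane)
  obtain p' q' where pq': "(p', q') \<in> set planes" "set (nibble_span [s', u']) \<subseteq> set (nibble_span [p', q'])"
    by (rule span_pair_in_plane)
  obtain c n where "set (nibble_products (p, q, p', q')) \<subseteq> {x. maximal_product c n x}"
    using pq(1) pq'(1) by (rule plane_products_in_maximal_product)
  moreover have "set (nibble_products (s, u, s', u')) \<subseteq> set (nibble_products (p, q, p', q'))"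
    using pq(2) pq'(2) by (rule nibble_products_mono)
  ultimately show "\<exists>c n. T \<subseteq> {x. maximal_product c n x}"
    using T by blast
next
  assume "\<exists>c n. T \<subseteq> {x. maximal_product c n x}"
  then obtain c n where "T \<subseteq> {x. maximal_product c n x}"
    by blast
  moreover obtain s u s' u' where "maximal_generator c n = (s, u, s', u')"
    by (metis prod_cases4)
  ultimately have "nibble_vec ` T \<subseteq> nibble_vec ` set (nibble_products (s, u, s', u'))"
    using maximal_product_subset_products[of c n] by (metis image_mono subset_trans)
  then show "\<exists>x y x' y'. nibble_vec ` T \<subseteq> hadamard_products (vec.span {x, y}) (vec.span {x', y'})"
    by (auto simp: nibble_vec_products)
qed

lemma filter_greater_all_nibbles: "filter ((<) a) all_nibbles = tl (dropWhile (\<lambda>b. b \<noteq> a) all_nibbles)"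
  using sorted_all_nibbles by (rule filter_greater_eq_tl_dropWhile) (simp add: set_all_nibbles)

lemma finite_UNIV_bit_vec: "finite (UNIV :: (bit^4) set)"
  using bij_nibble_vec by (metis bij_betw_finite finite)

lemma card_4_sets_of_bit_vectors:
  assumes "\<And>a b c d. a < b \<Longrightarrow> b < c \<Longrightarrow> c < d \<Longrightarrow> \<Phi> (nibble_vec ` {a, b, c, d}) \<longleftrightarrow> Q a b c d"
  shows "card {S :: (bit^4) set. card S = 4 \<and> \<Phi> S} =
    (\<Sum>a\<leftarrow>all_nibbles. \<Sum>b\<leftarrow>filter ((<) a) all_nibbles. \<Sum>c\<leftarrow>filter ((<) b) all_nibbles.
      length (filter (Q a b c) (filter ((<) c) all_nibbles)))"
proof -
  have "card {S :: (bit^4) set. card S = 4 \<and> \<Phi> S} =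
      card {T. card (nibble_vec ` T) = 4 \<and> \<Phi> (nibble_vec ` T)}"
    using bij_nibble_vec by (rule card_Collect_image_bij)
  also have "\<dots> = card {T. card T = 4 \<and> \<Phi> (nibble_vec ` T)}"
    using inj_nibble_vec by (simp add: card_image inj_on_subset)
  also have "\<dots> = card {(a, b, c, d). a < b \<and> b < c \<and> c < d \<and> \<Phi> (nibble_vec ` {a, b, c, d})}"
    by (rule card_4_subsets_eq_card_sorted)
  also have "\<dots> = card {(a, b, c, d). a < b \<and> b < c \<and> c < d \<and> Q a b c d}"
    by (intro arg_cong[where f = card]) (auto simp: assms simp del: image_insert image_empty)
  also have "\<dots> = (\<Sum>a\<leftarrow>all_nibbles. \<Sum>b\<leftarrow>filter ((<) a) all_nibbles. \<Sum>c\<leftarrow>filter ((<) b) all_nibbles.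
      length (filter (Q a b c) (filter ((<) c) all_nibbles)))"
    using sorted_all_nibbles set_all_nibbles by (rule card_sorted_quadruples)
  finally show ?thesis .
qed

lemmas counting_evaluation =
  all_nibbles_def dropWhile.simps list.sel(3) filter.simps
  sum_list.Cons sum_list.Nil list.size(3) list.size(4) add_0 add_Suc nibbles_independent.simps
  nibble_evaluation

lemma count_independent_eval:
  "(\<Sum>a\<leftarrow>all_nibbles. \<Sum>b\<leftarrow>filter ((<) a) all_nibbles. \<Sum>c\<leftarrow>filter ((<) b) all_nibbles.
    length (filter (\<lambda>d. nibbles_independent [a, b, c, d]) (filter ((<) c) all_nibbles))) = 840"
  unfolding filter_greater_all_nibbles by (simp only: counting_evaluation cong: if_weak_cong)

lemma set_chunks: "set [C0, C1, C2, C3, C4] = UNIV"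
  using chunk.exhaust by auto

definition in_maximal_product :: "nibble list \<Rightarrow> bool" where
  "in_maximal_product q \<longleftrightarrow>
    list_ex (\<lambda>c. list_ex (\<lambda>n. list_all (maximal_product c n) q) all_nibbles) [C0, C1, C2, C3, C4]"

lemma in_maximal_product_iff: "in_maximal_product q \<longleftrightarrow> (\<exists>c n. set q \<subseteq> {x. maximal_product c n x})"
  unfolding in_maximal_product_def list_ex_iff list_all_iff set_all_nibbles set_chunks by auto

lemma count_expressible_eval:
  "(\<Sum>a\<leftarrow>all_nibbles. \<Sum>b\<leftarrow>filter ((<) a) all_nibbles. \<Sum>c\<leftarrow>filter ((<) b) all_nibbles.
    length (filter (\<lambda>d. nibbles_independent [a, b, c, d] \<and> in_maximal_product [a, b, c, d])
      (filter ((<) c) all_nibbles))) = 619"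
  unfolding filter_greater_all_nibbles filter_filter[symmetric]
  by (simp only: counting_evaluation in_maximal_product_def maximal_product.simps cong: if_weak_cong)

lemma independent_iff_nibbles_independent:
  assumes "a < b" "b < c" "c < d"
  shows "vec.independent (nibble_vec ` {a, b, c, d}) \<longleftrightarrow> nibbles_independent [a, b, c, d]"
proof -
  have "distinct [a, b, c, d]"
    using assms by auto
  then show ?thesis
    using nibbles_independent_iff by (metis list.set(1,2))
qed

lemma card_independent_4_sets: "card {S :: (bit^4) set. card S = 4 \<and> vec.independent S} = 840"
proof -
  have "card {S :: (bit^4) set. card S = 4 \<and> vec.independent S} =
    (\<Sum>a\<leftarrow>all_nibbles. \<Sum>b\<leftarrow>filter ((<) a) all_nibbles. \<Sum>c\<leftarrow>filter ((<) b) all_nibbles.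
      length (filter (\<lambda>d. nibbles_independent [a, b, c, d]) (filter ((<) c) all_nibbles)))"
    by (rule card_4_sets_of_bit_vectors) (rule independent_iff_nibbles_independent)
  also have "\<dots> = 840"
    by (rule count_independent_eval)
  finally show ?thesis .
qed

lemma card_hadamard_22_independent_4_sets:
  "card {S :: (bit^4) set. card S = 4 \<and> vec.independent S \<and> hadamard_22_rows S} = 619"
proof -
  have "card {S :: (bit^4) set. card S = 4 \<and> vec.independent S \<and> hadamard_22_rows S} =
    (\<Sum>a\<leftarrow>all_nibbles. \<Sum>b\<leftarrow>filter ((<) a) all_nibbles. \<Sum>c\<leftarrow>filter ((<) b) all_nibbles.
      length (filter (\<lambda>d. nibbles_independent [a, b, c, d] \<and> in_maximal_product [a, b, c, d])
        (filter ((<) c) all_nibbles)))"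
    by (rule card_4_sets_of_bit_vectors)
      (simp add: independent_iff_nibbles_independent hadamard_22_rows_nibbles_iff
        in_maximal_product_iff del: nibbles_independent.simps image_insert image_empty)
  also have "\<dots> = 619"
    by (rule count_expressible_eval)
  finally show ?thesis .
qed

lemma card_rank_4_matrices:
  "card {M :: bit^4^4. rank M = 4 \<and> \<Phi> (range (vec_nth M))} =
    24 * card {S. card S = 4 \<and> vec.independent S \<and> \<Phi> S}"
proof -
  let ?F = "{S :: (bit^4) set. card S = 4 \<and> vec.independent S \<and> \<Phi> S}"
  have rows: "{M :: bit^4^4. rank M = 4 \<and> \<Phi> (range (vec_nth M))} = {M. range (vec_nth M) \<in> ?F}"
    using rank_eq_nrows_iff[where 'm = 4] by auto
  have "finite (UNIV :: (bit^4) set set)"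
    using finite_UNIV_bit_vec by (simp add: Finite_Set.finite_set)
  then have "finite ?F"
    by (rule finite_subset[rotated]) simp
  then have "card {M :: bit^4^4. range (vec_nth M) \<in> ?F} = fact CARD(4) * card ?F"
    by (rule card_vec_with_range_in) simp
  then show ?thesis
    by (simp only: rows) (simp add: fact_numeral)
qed

theorem mainTheorem1:
  shows "card {M :: bit^4^4. rank M = 4} = 20160
    \<and> card {M :: bit^4^4. rank M = 4 \<and> hadamard_22_expressible M} = 14856
    \<and> card {M :: bit^4^4. rank M = 4 \<and> \<not> hadamard_22_expressible M} = 5304"
proof -
  have all: "card {M :: bit^4^4. rank M = 4} = 20160"
    using card_rank_4_matrices[of "\<lambda>_. True"] card_independent_4_sets by simp
  have expressible: "card {M :: bit^4^4. rank M = 4 \<and> hadamard_22_expressible M} = 14856"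
    using card_rank_4_matrices[of hadamard_22_rows] card_hadamard_22_independent_4_sets
    by (simp add: hadamard_22_expressible_iff)
  have "finite {M :: bit^4^4. rank M = 4}"
    using all by (metis card.infinite zero_neq_numeral)
  then have "card {M :: bit^4^4. rank M = 4 \<and> \<not> hadamard_22_expressible M} =
      card {M :: bit^4^4. rank M = 4} - card {M :: bit^4^4. rank M = 4 \<and> hadamard_22_expressible M}"
    by (subst card_Diff_subset[symmetric]) (auto intro: arg_cong[where f = card])
  then show ?thesis
    using all expressible by simp
qed

end
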